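(* Let $n\ge 2$, $\gamma<1$ real and $z_1,\dots,z_n\in\mathbb{C}$ not all zero with $\frac{\gamma}{n}\big(\sum_\ell z_\ell\big)^2=\sum_\ell z_\ell^2$; write $z_\ell=\alpha_\ell+i\beta_\ell$ and $\vec\alpha=(\alpha_\ell)$, $\vec\beta=(\beta_\ell)$, $\mathbf 1=(1,\dots,1)\in\mathbb{R}^n$. The following are equivalent: (a) there are $a,b,c\in\mathbb{R}$, not all zero, with $a\vec\alpha+b\vec\beta+c\mathbf 1=0$; (b) there is $\lambda\in\mathbb{C}\setminus\{0\}$ with $\lambda z_\ell=\alpha'_\ell+i\beta$ for all $\ell$, where $\alpha'_\ell\in\mathbb{R}$ and $\beta\in\mathbb{R}$ is independent of $\ell$; (c) $n\sum_\ell|z_\ell|^2+(\gamma-2)\big|\sum_\ell z_\ell\big|^2=0$. Moreover, in case (b) necessarily $\beta\ne0$, $\sum_\ell\alpha'_\ell=0$ and $\gamma=1-\frac{1}{n\beta^2}\sum_\ell\alpha_\ell'^2$. Also, if $\sum_\ell z_\ell\ne0$ there is $\lambda\in\mathbb{C}\setminus\{0\}$ such that $w_\ell=\lambda z_\ell$ satisfy $\sum\operatorname{Re}w_\ell=1$, $\sum\operatorname{Im}w_\ell=0$, $\sum\operatorname{Re}w_\ell\operatorname{Im}w_\ell=0$. *)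

theory Defs
  imports Complex_Main
begin

end

theory Submission
  imports Defs "HOL-Analysis.Convex"
begin

(*
  Let z_l (l in a finite index set I of size N) be complex numbers, not all zero, with
  (gamma/N) (sum z_l)^2 = sum z_l^2 and gamma < 1.  Both this relation and the vanishing of
  defect = N sum |z_l|^2 + (gamma - 2) |sum z_l|^2 are invariant under z_l -> lam z_l, lam <> 0.
  Condition (b) says that some such lam moves all points onto a horizontal line Im = beta, and
  condition (a) is the same statement in coordinates, since Im (lam z) = Re lam Im z + Im lam Re z.

  For points on a horizontal line, the imaginary part of the relation gives
  (gamma - 1) beta sum Re = 0 and the real part links sum Re^2 to beta; beta = 0 is excluded
  because real solutions vanish when gamma < 1 (mean/root-mean-square inequality).  This yields
  the consequences of (b), which in turn make the defect vanish.  Conversely, a vanishing defect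
  and the normalisation sum z_l = i N force sum Im = sum Im^2 = N, hence Im = 1 throughout.
  Normalising sum z_l = 1 instead gives the last claim.
*)

definition defect :: "'a set \<Rightarrow> real \<Rightarrow> ('a \<Rightarrow> complex) \<Rightarrow> real" where
  "defect I \<gamma> w = real (card I) * (\<Sum>l\<in>I. (cmod (w l))\<^sup>2) + (\<gamma> - 2) * (cmod (\<Sum>l\<in>I. w l))\<^sup>2"

lemma defect_Re_Im:
  "defect I \<gamma> w = real (card I) * ((\<Sum>l\<in>I. (Re (w l))\<^sup>2) + (\<Sum>l\<in>I. (Im (w l))\<^sup>2))
      + (\<gamma> - 2) * ((\<Sum>l\<in>I. Re (w l))\<^sup>2 + (\<Sum>l\<in>I. Im (w l))\<^sup>2)"
  by (simp add: defect_def cmod_power2 sum.distrib)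

lemma defect_scale: "defect I \<gamma> (\<lambda>l. lam * w l) = (cmod lam)\<^sup>2 * defect I \<gamma> w"
  by (simp add: defect_def norm_mult power_mult_distrib algebra_simps
      flip: sum_distrib_left)

lemma quadratic_relation_scale:
  fixes c :: complex
  assumes "c * (\<Sum>l\<in>I. w l)\<^sup>2 = (\<Sum>l\<in>I. (w l)\<^sup>2)"
  shows "c * (\<Sum>l\<in>I. lam * w l)\<^sup>2 = (\<Sum>l\<in>I. (lam * w l)\<^sup>2)"
proof -
  have "(\<Sum>l\<in>I. (lam * w l)\<^sup>2) = lam\<^sup>2 * (\<Sum>l\<in>I. (w l)\<^sup>2)"
    by (simp add: power_mult_distrib sum_distrib_left)
  also have "\<dots> = c * (lam * (\<Sum>l\<in>I. w l))\<^sup>2"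
    using assms by (simp add: power_mult_distrib)
  finally show ?thesis
    by (simp add: sum_distrib_left)
qed

lemma quadratic_relation_Re_Im:
  assumes "of_real c * (\<Sum>l\<in>I. w l)\<^sup>2 = (\<Sum>l\<in>I. (w l)\<^sup>2)"
  shows "c * ((\<Sum>l\<in>I. Re (w l))\<^sup>2 - (\<Sum>l\<in>I. Im (w l))\<^sup>2)
           = (\<Sum>l\<in>I. (Re (w l))\<^sup>2) - (\<Sum>l\<in>I. (Im (w l))\<^sup>2)"
    and "c * ((\<Sum>l\<in>I. Re (w l)) * (\<Sum>l\<in>I. Im (w l))) = (\<Sum>l\<in>I. Re (w l) * Im (w l))"
proof -
  show "c * ((\<Sum>l\<in>I. Re (w l))\<^sup>2 - (\<Sum>l\<in>I. Im (w l))\<^sup>2)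
          = (\<Sum>l\<in>I. (Re (w l))\<^sup>2) - (\<Sum>l\<in>I. (Im (w l))\<^sup>2)"
    using arg_cong[OF assms, of Re] by (simp add: Re_power2 sum_subtractf)
  have "c * (2 * (\<Sum>l\<in>I. Re (w l)) * (\<Sum>l\<in>I. Im (w l))) = (\<Sum>l\<in>I. 2 * Re (w l) * Im (w l))"
    using arg_cong[OF assms, of Im] by (simp add: Im_power2)
  then show "c * ((\<Sum>l\<in>I. Re (w l)) * (\<Sum>l\<in>I. Im (w l))) = (\<Sum>l\<in>I. Re (w l) * Im (w l))"
    by (simp add: mult.assoc flip: sum_distrib_left)
qed

(* For gamma < 1 the relation has no nonzero real solutions: by the mean/root-mean-square
   inequality (sum x)^2 <= N sum x^2 = gamma (sum x)^2 forces sum x = 0 and then sum x^2 = 0. *)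
lemma real_quadratic_relation_trivial:
  fixes x :: "'a \<Rightarrow> real"
  assumes fin: "finite I" and \<gamma>: "\<gamma> < 1"
    and rel: "\<gamma> * (\<Sum>l\<in>I. x l)\<^sup>2 = real (card I) * (\<Sum>l\<in>I. (x l)\<^sup>2)"
  shows "\<forall>l\<in>I. x l = 0"
proof (cases "I = {}")
  case False
  have "(\<Sum>l\<in>I. x l)\<^sup>2 \<le> \<gamma> * (\<Sum>l\<in>I. x l)\<^sup>2"
    using sum_squared_le_sum_of_squares[of x I] rel by (simp add: mult.commute)
  then have "(1 - \<gamma>) * (\<Sum>l\<in>I. x l)\<^sup>2 \<le> 0"
    by (simp add: algebra_simps)
  then have "(\<Sum>l\<in>I. x l)\<^sup>2 = 0"
    using \<gamma> by (simp add: mult_le_0_iff)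
  then have "(\<Sum>l\<in>I. (x l)\<^sup>2) = 0"
    using rel fin False by simp
  then show ?thesis
    using fin by (simp add: sum_nonneg_eq_0_iff)
qed simp

(* Equality case: if sum f = sum f^2 = N then every f_l = 1, because sum (f_l - 1)^2 = 0. *)
lemma sum_and_sum_squares_card_imp_one:
  fixes f :: "'a \<Rightarrow> real"
  assumes fin: "finite I"
    and sum1: "(\<Sum>l\<in>I. f l) = real (card I)" and sum2: "(\<Sum>l\<in>I. (f l)\<^sup>2) = real (card I)"
  shows "\<forall>l\<in>I. f l = 1"
proof -
  have "(\<Sum>l\<in>I. (f l - 1)\<^sup>2) = (\<Sum>l\<in>I. (f l)\<^sup>2) - 2 * (\<Sum>l\<in>I. f l) + real (card I)"
    by (simp add: power2_diff sum.distrib sum_subtractf sum_distrib_left)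
  also have "\<dots> = 0"
    using sum1 sum2 by simp
  finally show ?thesis
    using fin by (simp add: sum_nonneg_eq_0_iff)
qed

(* Condition (a) is condition (b) in coordinates: Im (lam z) = Re lam Im z + Im lam Re z,
   so the coefficients (a, b, c) correspond to lam = b + i a and height -c. *)
lemma affine_dependence_iff_horizontal:
  assumes "I \<noteq> {}"
  shows "(\<exists>a b c :: real. (a \<noteq> 0 \<or> b \<noteq> 0 \<or> c \<noteq> 0) \<and>
            (\<forall>l\<in>I. a * Re (z l) + b * Im (z l) + c = 0))
         \<longleftrightarrow> (\<exists>lam. lam \<noteq> 0 \<and> (\<exists>\<beta>. \<forall>l\<in>I. Im (lam * z l) = \<beta>))"
proof
  assume "\<exists>a b c :: real. (a \<noteq> 0 \<or> b \<noteq> 0 \<or> c \<noteq> 0) \<and>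
            (\<forall>l\<in>I. a * Re (z l) + b * Im (z l) + c = 0)"
  then obtain a b c :: real where nz: "a \<noteq> 0 \<or> b \<noteq> 0 \<or> c \<noteq> 0"
    and affine: "\<forall>l\<in>I. a * Re (z l) + b * Im (z l) + c = 0"
    by blast
  have "Complex b a \<noteq> 0"
    using nz affine assms by (auto simp: complex_eq_iff)
  moreover have "\<forall>l\<in>I. Im (Complex b a * z l) = - c"
    using affine by (auto simp: algebra_simps)
  ultimately show "\<exists>lam. lam \<noteq> 0 \<and> (\<exists>\<beta>. \<forall>l\<in>I. Im (lam * z l) = \<beta>)"
    by blast
next
  assume "\<exists>lam. lam \<noteq> 0 \<and> (\<exists>\<beta>. \<forall>l\<in>I. Im (lam * z l) = \<beta>)"
  then obtain lam \<beta> where "lam \<noteq> 0" and "\<forall>l\<in>I. Im (lam * z l) = \<beta>"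
    by blast
  then have "(Im lam \<noteq> 0 \<or> Re lam \<noteq> 0 \<or> - \<beta> \<noteq> 0) \<and>
      (\<forall>l\<in>I. Im lam * Re (z l) + Re lam * Im (z l) + - \<beta> = 0)"
    by (auto simp: complex_eq_iff algebra_simps)
  then show "\<exists>a b c :: real. (a \<noteq> 0 \<or> b \<noteq> 0 \<or> c \<noteq> 0) \<and>
      (\<forall>l\<in>I. a * Re (z l) + b * Im (z l) + c = 0)"
    by blast
qed

lemma horizontal_line_form:
  "(\<exists>(\<alpha>' :: 'a \<Rightarrow> real) \<beta>. \<forall>l\<in>I. w l = complex_of_real (\<alpha>' l) + \<i> * complex_of_real \<beta>)
   \<longleftrightarrow> (\<exists>\<beta>. \<forall>l\<in>I. Im (w l) = \<beta>)"
proof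
  assume "\<exists>\<beta>. \<forall>l\<in>I. Im (w l) = \<beta>"
  then obtain \<beta> where "\<forall>l\<in>I. Im (w l) = \<beta>"
    by blast
  then show "\<exists>(\<alpha>' :: 'a \<Rightarrow> real) \<beta>. \<forall>l\<in>I. w l = complex_of_real (\<alpha>' l) + \<i> * complex_of_real \<beta>"
    by (intro exI[of _ "\<lambda>l. Re (w l)"] exI[of _ \<beta>]) (auto simp: complex_eq_iff)
qed auto

lemma horizontal_solution_properties:
  assumes fin: "finite I" and \<gamma>: "\<gamma> < 1"
    and rel: "of_real (\<gamma> / real (card I)) * (\<Sum>l\<in>I. w l)\<^sup>2 = (\<Sum>l\<in>I. (w l)\<^sup>2)"
    and nz: "\<exists>l\<in>I. w l \<noteq> 0"
    and height: "\<forall>l\<in>I. Im (w l) = \<beta>"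
  shows "\<beta> \<noteq> 0" and "(\<Sum>l\<in>I. Re (w l)) = 0"
    and "\<gamma> = 1 - (\<Sum>l\<in>I. (Re (w l))\<^sup>2) / (real (card I) * \<beta>\<^sup>2)"
proof -
  define N A Q where "N = real (card I)" and "A = (\<Sum>l\<in>I. Re (w l))"
    and "Q = (\<Sum>l\<in>I. (Re (w l))\<^sup>2)"
  have N: "N > 0"
    using fin nz by (auto simp: N_def card_gt_0_iff)
  have Im_sums: "(\<Sum>l\<in>I. Im (w l)) = N * \<beta>" "(\<Sum>l\<in>I. (Im (w l))\<^sup>2) = N * \<beta>\<^sup>2"
      "(\<Sum>l\<in>I. Re (w l) * Im (w l)) = \<beta> * A"
    using height by (simp_all add: N_def A_def sum_distrib_left mult.commute)
  have re_eq: "\<gamma> / N * (A\<^sup>2 - (N * \<beta>)\<^sup>2) = Q - N * \<beta>\<^sup>2"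
    using quadratic_relation_Re_Im(1)[OF rel] Im_sums by (simp add: N_def A_def Q_def)
  have im_eq: "\<gamma> / N * (A * (N * \<beta>)) = \<beta> * A"
    using quadratic_relation_Re_Im(2)[OF rel] Im_sums by (simp add: N_def A_def)
  show \<beta>: "\<beta> \<noteq> 0"
  proof
    assume "\<beta> = 0"
    then have "\<gamma> * A\<^sup>2 = N * Q"
      using re_eq N by (simp add: field_simps)
    then have "\<forall>l\<in>I. Re (w l) = 0"
      using real_quadratic_relation_trivial[OF fin \<gamma>] by (simp add: N_def A_def Q_def)
    then show False
      using height nz \<open>\<beta> = 0\<close> by (auto simp: complex_eq_iff)
  qed
  have "(\<gamma> - 1) * (A * \<beta>) = 0"
    using im_eq N by (simp add: field_simps)
  then show A: "(\<Sum>l\<in>I. Re (w l)) = 0"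
    using \<beta> \<gamma> by (simp add: A_def)
  have "\<gamma> / N * (A\<^sup>2 - (N * \<beta>)\<^sup>2) = - (\<gamma> * (N * \<beta>\<^sup>2))"
    using A N by (simp add: A_def power2_eq_square)
  then have "\<gamma> * (N * \<beta>\<^sup>2) = N * \<beta>\<^sup>2 - Q"
    using re_eq by linarith
  then show "\<gamma> = 1 - (\<Sum>l\<in>I. (Re (w l))\<^sup>2) / (real (card I) * \<beta>\<^sup>2)"
    using N \<beta> by (simp add: N_def Q_def field_simps)
qed

(* (b) implies (c): on a horizontal line the defect equals N Q + (gamma - 1) N^2 beta^2 = 0. *)
lemma horizontal_imp_defect_zero:
  assumes fin: "finite I" and \<gamma>: "\<gamma> < 1"
    and rel: "of_real (\<gamma> / real (card I)) * (\<Sum>l\<in>I. w l)\<^sup>2 = (\<Sum>l\<in>I. (w l)\<^sup>2)"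
    and nz: "\<exists>l\<in>I. w l \<noteq> 0"
    and height: "\<forall>l\<in>I. Im (w l) = \<beta>"
  shows "defect I \<gamma> w = 0"
proof -
  note props = horizontal_solution_properties[OF assms]
  define N Q where "N = real (card I)" and "Q = (\<Sum>l\<in>I. (Re (w l))\<^sup>2)"
  have "N > 0"
    using fin nz by (auto simp: N_def card_gt_0_iff)
  then have Q: "Q = (1 - \<gamma>) * (N * \<beta>\<^sup>2)"
    using props(1,3) by (simp add: N_def Q_def)
  have "defect I \<gamma> w = N * (Q + N * \<beta>\<^sup>2) + (\<gamma> - 2) * (N * \<beta>)\<^sup>2"
    using height props(2) by (simp add: defect_Re_Im N_def Q_def)
  also have "\<dots> = 0"
    by (simp add: Q power2_eq_square algebra_simps)
  finally show ?thesis .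
qed

(* (c) implies (b): normalise sum w to i N.  The real part of the relation and the vanishing
   defect then give sum Im = sum Im^2 = N, so all points lie on the line Im = 1. *)
lemma defect_zero_imp_horizontal:
  assumes fin: "finite I"
    and rel: "of_real (\<gamma> / real (card I)) * (\<Sum>l\<in>I. w l)\<^sup>2 = (\<Sum>l\<in>I. (w l)\<^sup>2)"
    and nz: "\<exists>l\<in>I. w l \<noteq> 0"
    and defect: "defect I \<gamma> w = 0"
  shows "\<exists>lam. lam \<noteq> 0 \<and> (\<forall>l\<in>I. Im (lam * w l) = 1)"
proof -
  define N S where "N = real (card I)" and "S = (\<Sum>l\<in>I. w l)"
  have N: "N > 0"
    using fin nz by (auto simp: N_def card_gt_0_iff)
  have S: "S \<noteq> 0"
  proof
    assume "S = 0"
    then have "(\<Sum>l\<in>I. (cmod (w l))\<^sup>2) = 0"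
      using defect N by (simp add: defect_def N_def S_def)
    then show False
      using fin nz by (simp add: sum_nonneg_eq_0_iff)
  qed
  define lam where "lam = \<i> * of_real N / S"
  define v where "v = (\<lambda>l. lam * w l)"
  have lam: "lam \<noteq> 0"
    using S N by (simp add: lam_def)
  have rel_v: "of_real (\<gamma> / N) * (\<Sum>l\<in>I. v l)\<^sup>2 = (\<Sum>l\<in>I. (v l)\<^sup>2)"
    unfolding v_def N_def by (rule quadratic_relation_scale[OF rel])
  have "(\<Sum>l\<in>I. v l) = lam * S"
    by (simp add: v_def S_def sum_distrib_left)
  then have "(\<Sum>l\<in>I. v l) = \<i> * of_real N"
    using S by (simp add: lam_def)
  then have Re_sum: "(\<Sum>l\<in>I. Re (v l)) = 0" and Im_sum: "(\<Sum>l\<in>I. Im (v l)) = N"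
    by (simp_all flip: Re_sum Im_sum)
  define R J where "R = (\<Sum>l\<in>I. (Re (v l))\<^sup>2)" and "J = (\<Sum>l\<in>I. (Im (v l))\<^sup>2)"
  have "\<gamma> / N * (0 - N\<^sup>2) = R - J"
    using quadratic_relation_Re_Im(1)[OF rel_v] Re_sum Im_sum by (simp add: R_def J_def)
  then have difference: "J - R = \<gamma> * N"
    using N by (simp add: power2_eq_square)
  have "defect I \<gamma> v = 0"
    using defect by (simp add: v_def defect_scale)
  then have "N * (R + J + (\<gamma> - 2) * N) = 0"
    using Re_sum Im_sum by (simp add: defect_Re_Im N_def R_def J_def power2_eq_square algebra_simps)
  then have "R + J + (\<gamma> - 2) * N = 0"
    using N by simp
  then have total: "R + J = (2 - \<gamma>) * N"
    by (simp add: algebra_simps)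
  have "(\<Sum>l\<in>I. (Im (v l))\<^sup>2) = N"
    using difference total by (simp add: J_def algebra_simps)
  then have "\<forall>l\<in>I. Im (v l) = 1"
    using sum_and_sum_squares_card_imp_one[OF fin] Im_sum by (simp add: N_def)
  then show ?thesis
    using lam by (auto simp: v_def)
qed

lemma horizontal_iff_defect_zero:
  assumes fin: "finite I" and \<gamma>: "\<gamma> < 1"
    and rel: "of_real (\<gamma> / real (card I)) * (\<Sum>l\<in>I. w l)\<^sup>2 = (\<Sum>l\<in>I. (w l)\<^sup>2)"
    and nz: "\<exists>l\<in>I. w l \<noteq> 0"
  shows "(\<exists>lam. lam \<noteq> 0 \<and> (\<exists>\<beta>. \<forall>l\<in>I. Im (lam * w l) = \<beta>)) \<longleftrightarrow> defect I \<gamma> w = 0"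
proof
  assume "\<exists>lam. lam \<noteq> 0 \<and> (\<exists>\<beta>. \<forall>l\<in>I. Im (lam * w l) = \<beta>)"
  then obtain lam \<beta> where lam: "lam \<noteq> 0" and height: "\<forall>l\<in>I. Im (lam * w l) = \<beta>"
    by blast
  have "\<exists>l\<in>I. lam * w l \<noteq> 0"
    using nz lam by auto
  then have "defect I \<gamma> (\<lambda>l. lam * w l) = 0"
    using horizontal_imp_defect_zero[OF fin \<gamma> quadratic_relation_scale[OF rel]] height by blast
  then show "defect I \<gamma> w = 0"
    using lam by (simp add: defect_scale)
next
  assume "defect I \<gamma> w = 0"
  then show "\<exists>lam. lam \<noteq> 0 \<and> (\<exists>\<beta>. \<forall>l\<in>I. Im (lam * w l) = \<beta>)"
    using defect_zero_imp_horizontal[OF fin rel nz] by blast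
qed

lemma normalised_solution:
  assumes rel: "of_real c * (\<Sum>l\<in>I. w l)\<^sup>2 = (\<Sum>l\<in>I. (w l)\<^sup>2)"
    and S: "(\<Sum>l\<in>I. w l) \<noteq> 0"
  shows "\<exists>lam. lam \<noteq> 0 \<and> (\<Sum>l\<in>I. Re (lam * w l)) = 1 \<and> (\<Sum>l\<in>I. Im (lam * w l)) = 0
           \<and> (\<Sum>l\<in>I. Re (lam * w l) * Im (lam * w l)) = 0"
proof -
  define lam where "lam = 1 / (\<Sum>l\<in>I. w l)"
  define v where "v = (\<lambda>l. lam * w l)"
  have rel_v: "of_real c * (\<Sum>l\<in>I. v l)\<^sup>2 = (\<Sum>l\<in>I. (v l)\<^sup>2)"
    unfolding v_def by (rule quadratic_relation_scale[OF rel])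
  have "(\<Sum>l\<in>I. v l) = lam * (\<Sum>l\<in>I. w l)"
    by (simp add: v_def sum_distrib_left)
  then have "(\<Sum>l\<in>I. v l) = 1"
    using S by (simp add: lam_def)
  then have Re_sum: "(\<Sum>l\<in>I. Re (v l)) = 1" and Im_sum: "(\<Sum>l\<in>I. Im (v l)) = 0"
    by (simp_all flip: Re_sum Im_sum)
  moreover have "(\<Sum>l\<in>I. Re (v l) * Im (v l)) = 0"
    using quadratic_relation_Re_Im(2)[OF rel_v] Re_sum Im_sum by simp
  moreover have "lam \<noteq> 0"
    using S by (simp add: lam_def)
  ultimately show ?thesis
    unfolding v_def by blast
qed

theorem lemma6p3:
  fixes n :: nat and \<gamma> :: real and z :: "nat \<Rightarrow> complex"
  assumes hn: "n \<ge> 2"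
    and h\<gamma>: "\<gamma> < 1"
    and hnz: "\<exists>l\<in>{1..n}. z l \<noteq> 0"
    and hrel: "complex_of_real \<gamma> / of_nat n * (\<Sum>l=1..n. z l)\<^sup>2 = (\<Sum>l=1..n. (z l)\<^sup>2)"
  shows "((\<exists>a b c :: real. (a \<noteq> 0 \<or> b \<noteq> 0 \<or> c \<noteq> 0) \<and>
             (\<forall>l\<in>{1..n}. a * Re (z l) + b * Im (z l) + c = 0))
          \<longleftrightarrow>
          (\<exists>lam :: complex. lam \<noteq> 0 \<and> (\<exists>(\<alpha>' :: nat \<Rightarrow> real) (\<beta> :: real).
             \<forall>l\<in>{1..n}. lam * z l = complex_of_real (\<alpha>' l) + \<i> * complex_of_real \<beta>)))
       \<and> ((\<exists>lam :: complex. lam \<noteq> 0 \<and> (\<exists>(\<alpha>' :: nat \<Rightarrow> real) (\<beta> :: real).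
             \<forall>l\<in>{1..n}. lam * z l = complex_of_real (\<alpha>' l) + \<i> * complex_of_real \<beta>))
          \<longleftrightarrow>
          real n * (\<Sum>l=1..n. (cmod (z l))\<^sup>2) + (\<gamma> - 2) * (cmod (\<Sum>l=1..n. z l))\<^sup>2 = 0)
       \<and> (\<forall>(lam :: complex) (\<alpha>' :: nat \<Rightarrow> real) (\<beta> :: real).
             lam \<noteq> 0 \<and> (\<forall>l\<in>{1..n}. lam * z l = complex_of_real (\<alpha>' l) + \<i> * complex_of_real \<beta>)
             \<longrightarrow> \<beta> \<noteq> 0 \<and> (\<Sum>l=1..n. \<alpha>' l) = 0
                 \<and> \<gamma> = 1 - (\<Sum>l=1..n. (\<alpha>' l)\<^sup>2) / (real n * \<beta>\<^sup>2))
       \<and> ((\<Sum>l=1..n. z l) \<noteq> 0 \<longrightarrow>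
          (\<exists>lam :: complex. lam \<noteq> 0 \<and>
             (\<Sum>l=1..n. Re (lam * z l)) = 1 \<and> (\<Sum>l=1..n. Im (lam * z l)) = 0 \<and>
             (\<Sum>l=1..n. Re (lam * z l) * Im (lam * z l)) = 0))"
proof -
  have fin: "finite {1..n}" and card: "card {1..n} = n" and ne: "{1..n} \<noteq> {}"
    using hn by simp_all
  have rel: "of_real (\<gamma> / real (card {1..n})) * (\<Sum>l\<in>{1..n}. z l)\<^sup>2 = (\<Sum>l\<in>{1..n}. (z l)\<^sup>2)"
    using hrel by simp
  have consequences: "\<beta> \<noteq> 0 \<and> (\<Sum>l=1..n. \<alpha>' l) = 0 \<and> \<gamma> = 1 - (\<Sum>l=1..n. (\<alpha>' l)\<^sup>2) / (real n * \<beta>\<^sup>2)"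
    if lam: "lam \<noteq> 0"
      and line: "\<forall>l\<in>{1..n}. lam * z l = complex_of_real (\<alpha>' l) + \<i> * complex_of_real \<beta>"
    for lam \<alpha>' \<beta>
  proof -
    have "\<forall>l\<in>{1..n}. Re (lam * z l) = \<alpha>' l" and height: "\<forall>l\<in>{1..n}. Im (lam * z l) = \<beta>"
      using line by simp_all
    moreover have "\<exists>l\<in>{1..n}. lam * z l \<noteq> 0"
      using hnz lam by auto
    ultimately show ?thesis
      using horizontal_solution_properties[OF fin h\<gamma> quadratic_relation_scale[OF rel] _ height]
      by (simp add: card)
  qed
  show ?thesis
    using affine_dependence_iff_horizontal[OF ne, of z]
      horizontal_iff_defect_zero[OF fin h\<gamma> rel hnz] consequences normalised_solution[OF rel]
    by (simp only: horizontal_line_form defect_def card) blast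
qed

end
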